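(* For every agent $k$ and every $n\ge0$, $\|e_{k,n}\|\le B_e$ and $\|\widehat e_{k,n}\|\le B_e$, where $B_e:=\frac{1}{1-\lambda\gamma}\Big(\lambda+\frac{1-\lambda}{1-\gamma/b_\epsilon}\Big)$.
   Context: Constants $\lambda,\gamma\in(0,1)$ and $b_\epsilon>0$ with $\gamma<b_\epsilon$. For each agent $k$, importance ratios $\rho_{k,n},\widehat\rho_{k,n}>0$ satisfy $\rho_{k,n},\widehat\rho_{k,n}\le1/b_\epsilon$. Belief vectors $\mu_{k,n},\widehat\mu_{k,n}$ are probability vectors over a finite state set (so Euclidean norms are at most 1). Define $F_{k,0}=0$, $F_{k,n}=1+\gamma\rho_{k,n-1}F_{k,n-1}$, $M_{k,n}=\lambda+(1-\lambda)F_{k,n}$, $e_{k,-1}=0$, $e_{k,n}=\gamma\lambda e_{k,n-1}+M_{k,n}\mu_{k,n}$; the hatted quantities $\widehat F,\widehat M,\widehat e$ are defined identically with $\widehat\rho,\widehat\mu$ in place of $\rho,\mu$. $\|\cdot\|$ is the Euclidean norm. *)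

theory Defs
  imports "HOL-Analysis.Analysis"
begin

fun Ftr :: "real \<Rightarrow> (nat \<Rightarrow> real) \<Rightarrow> nat \<Rightarrow> real" where
  "Ftr \<gamma> \<rho> 0 = 0"
| "Ftr \<gamma> \<rho> (Suc n) = 1 + \<gamma> * \<rho> n * Ftr \<gamma> \<rho> n"

definition Mtr :: "real \<Rightarrow> real \<Rightarrow> (nat \<Rightarrow> real) \<Rightarrow> nat \<Rightarrow> real" where
  "Mtr lam \<gamma> \<rho> n = lam + (1 - lam) * Ftr \<gamma> \<rho> n"

text \<open>Eligibility trace: e_{-1} = 0, e_n = gamma lambda e_{n-1} + M_n mu_n.
  Here etr ... n denotes e_n for n >= 0 (the base e_{-1} = 0 is built in).\<close>
fun etr :: "real \<Rightarrow> real \<Rightarrow> (nat \<Rightarrow> real) \<Rightarrow> (nat \<Rightarrow> real ^ 's) \<Rightarrow> nat \<Rightarrow> real ^ 's" where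
  "etr lam \<gamma> \<rho> \<mu> 0 = Mtr lam \<gamma> \<rho> 0 *\<^sub>R \<mu> 0"
| "etr lam \<gamma> \<rho> \<mu> (Suc n) = (\<gamma> * lam) *\<^sub>R etr lam \<gamma> \<rho> \<mu> n + Mtr lam \<gamma> \<rho> (Suc n) *\<^sub>R \<mu> (Suc n)"

definition prob_vec :: "real ^ 's \<Rightarrow> bool" where
  "prob_vec v \<longleftrightarrow> (\<forall>i. v $ i \<ge> 0) \<and> (\<Sum>i\<in>UNIV. v $ i) = 1"

end

theory Submission
  imports Defs
begin

text \<open>Both traces are driven recursions with contraction factor below one. The follow-on trace
  satisfies \<open>F (n+1) \<le> 1 + (\<gamma>/b) F n\<close> with \<open>\<gamma>/b < 1\<close>, so it stays below the sum
  \<open>1/(1 - \<gamma>/b)\<close> of the geometric series; hence the emphasis is at most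
  \<open>C = \<lambda> + (1 - \<lambda>)/(1 - \<gamma>/b)\<close>. A probability vector has Euclidean norm at most its
  \<open>\<ell>\<^sub>1\<close>-norm \<open>1\<close>, so the eligibility trace is driven by inputs of norm at most \<open>C\<close> with
  factor \<open>\<gamma>\<lambda> < 1\<close>, and the same geometric argument bounds it by \<open>C/(1 - \<gamma>\<lambda>)\<close>.\<close>

lemma norm_le_geometric_bound:
  fixes x y :: "nat \<Rightarrow> 'a::real_normed_vector"
  assumes "0 \<le> a" "a < 1"
    and "x 0 = y 0" "\<And>n. x (Suc n) = a *\<^sub>R x n + y (Suc n)"
    and "\<And>n. norm (y n) \<le> C"
  shows "norm (x n) \<le> C / (1 - a)"
proof (induction n)
  case 0
  have "0 \<le> C" using norm_ge_zero order_trans assms(5) by blast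
  then have "C \<le> C / (1 - a)" using assms(1,2) by (simp add: field_simps mult_left_le)
  then show ?case using assms(3,5) by (metis order_trans)
next
  case (Suc n)
  have "norm (x (Suc n)) \<le> a * norm (x n) + norm (y (Suc n))"
    using assms(1,4) norm_triangle_ineq[of "a *\<^sub>R x n" "y (Suc n)"] by simp
  also have "\<dots> \<le> a * (C / (1 - a)) + C"
    using Suc assms(1,5) by (intro add_mono mult_left_mono) auto
  also have "\<dots> = C / (1 - a)" using assms(2) by (simp add: field_simps)
  finally show ?case .
qed

lemma Ftr_bounds:
  assumes "0 \<le> \<gamma>" "q < 1" "\<And>n. 0 \<le> \<rho> n" "\<And>n. \<gamma> * \<rho> n \<le> q"
  shows "0 \<le> Ftr \<gamma> \<rho> n \<and> Ftr \<gamma> \<rho> n \<le> 1 / (1 - q)"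
proof (induction n)
  case 0
  then show ?case using assms(2) by simp
next
  case (Suc n)
  have "0 \<le> q" using assms(1,3,4) by (meson mult_nonneg_nonneg order_trans)
  have "\<gamma> * \<rho> n * Ftr \<gamma> \<rho> n \<le> q * (1 / (1 - q))"
    using Suc \<open>0 \<le> q\<close> assms(4) by (intro mult_mono) auto
  moreover have "1 + q * (1 / (1 - q)) = 1 / (1 - q)" using assms(2) by (simp add: field_simps)
  moreover have "0 \<le> \<gamma> * \<rho> n * Ftr \<gamma> \<rho> n" using Suc assms(1,3) by simp
  ultimately show ?case by simp
qed

lemma Mtr_bounds:
  assumes "0 \<le> lam" "lam \<le> 1" "0 \<le> Ftr \<gamma> \<rho> n" "Ftr \<gamma> \<rho> n \<le> B"
  shows "0 \<le> Mtr lam \<gamma> \<rho> n \<and> Mtr lam \<gamma> \<rho> n \<le> lam + (1 - lam) * B"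
  using assms mult_left_mono[of "Ftr \<gamma> \<rho> n" B "1 - lam"] by (simp add: Mtr_def)

lemma norm_le_one_if_prob_vec:
  assumes "prob_vec (v :: real ^ 's::finite)"
  shows "norm v \<le> 1"
proof -
  have "norm v \<le> (\<Sum>i\<in>UNIV. \<bar>v $ i\<bar>)" by (rule norm_le_l1_cart)
  also have "\<dots> = 1" using assms by (simp add: prob_vec_def)
  finally show ?thesis .
qed

lemma norm_etr_le:
  fixes \<mu> :: "nat \<Rightarrow> real ^ 's::finite"
  assumes "0 \<le> lam" "lam < 1" "0 \<le> \<gamma>" "\<gamma> < 1" "0 < b" "\<gamma> < b"
    and "\<And>n. 0 \<le> \<rho> n \<and> \<rho> n \<le> 1 / b"
    and "\<And>n. prob_vec (\<mu> n)"
  shows "norm (etr lam \<gamma> \<rho> \<mu> n) \<le> 1 / (1 - lam * \<gamma>) * (lam + (1 - lam) / (1 - \<gamma> / b))"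
proof -
  define C where "C = lam + (1 - lam) * (1 / (1 - \<gamma> / b))"
  have "\<gamma> * \<rho> m \<le> \<gamma> / b" for m
    using assms(3,5,7) mult_left_mono[of "\<rho> m" "1 / b" \<gamma>] by simp
  then have "0 \<le> Ftr \<gamma> \<rho> m \<and> Ftr \<gamma> \<rho> m \<le> 1 / (1 - \<gamma> / b)" for m
    using assms(3,5,6,7) by (intro Ftr_bounds) auto
  then have "0 \<le> Mtr lam \<gamma> \<rho> m \<and> Mtr lam \<gamma> \<rho> m \<le> C" for m
    unfolding C_def using assms(1,2) by (intro Mtr_bounds) auto
  then have input_bound: "norm (Mtr lam \<gamma> \<rho> m *\<^sub>R \<mu> m) \<le> C" for m
    using norm_le_one_if_prob_vec[OF assms(8)] mult_left_le[of "norm (\<mu> m)" "Mtr lam \<gamma> \<rho> m"]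
    by (metis abs_of_nonneg norm_scaleR norm_ge_zero order_trans)
  have "lam * \<gamma> < 1" using assms(1-4) mult_left_le[of \<gamma> lam] by linarith
  then have "norm (etr lam \<gamma> \<rho> \<mu> n) \<le> C / (1 - lam * \<gamma>)"
    using input_bound assms(1,3)
    by (intro norm_le_geometric_bound[where y = "\<lambda>m. Mtr lam \<gamma> \<rho> m *\<^sub>R \<mu> m"])
       (simp_all add: mult.commute)
  then show ?thesis by (simp add: C_def)
qed

theorem lemma2:
  fixes lam \<gamma> b\<^sub>\<epsilon> :: real
    and \<rho> \<rho>h :: "'k \<Rightarrow> nat \<Rightarrow> real"
    and \<mu> \<mu>h :: "'k \<Rightarrow> nat \<Rightarrow> real ^ 's::finite"
  assumes "0 < lam" "lam < 1" "0 < \<gamma>" "\<gamma> < 1" "0 < b\<^sub>\<epsilon>" "\<gamma> < b\<^sub>\<epsilon>"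
    and "\<And>k n. 0 < \<rho> k n \<and> \<rho> k n \<le> 1 / b\<^sub>\<epsilon>"
    and "\<And>k n. 0 < \<rho>h k n \<and> \<rho>h k n \<le> 1 / b\<^sub>\<epsilon>"
    and "\<And>k n. prob_vec (\<mu> k n)"
    and "\<And>k n. prob_vec (\<mu>h k n)"
  shows "\<forall>k n.
     norm (etr lam \<gamma> (\<rho> k) (\<mu> k) n)
       \<le> 1 / (1 - lam * \<gamma>) * (lam + (1 - lam) / (1 - \<gamma> / b\<^sub>\<epsilon>))
   \<and> norm (etr lam \<gamma> (\<rho>h k) (\<mu>h k) n)
       \<le> 1 / (1 - lam * \<gamma>) * (lam + (1 - lam) / (1 - \<gamma> / b\<^sub>\<epsilon>))"
proof (intro allI conjI)
  fix k n
  show "norm (etr lam \<gamma> (\<rho> k) (\<mu> k) n)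
       \<le> 1 / (1 - lam * \<gamma>) * (lam + (1 - lam) / (1 - \<gamma> / b\<^sub>\<epsilon>))"
    using assms by (intro norm_etr_le) (auto intro: less_imp_le)
  show "norm (etr lam \<gamma> (\<rho>h k) (\<mu>h k) n)
       \<le> 1 / (1 - lam * \<gamma>) * (lam + (1 - lam) / (1 - \<gamma> / b\<^sub>\<epsilon>))"
    using assms by (intro norm_etr_le) (auto intro: less_imp_le)
qed

end
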